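(* Let $P$ be a set partition of $[n]$ with $3\le |P|\le n-1$, and let $Q\le P$ be a set partition with $|Q|\ge 3$. Then there is a set partition $Q'$ with $Q'\preceq P$ and $Q\le Q'$, and moreover $Z_Q(H)\subset Z_{Q'}(H)$ for every $H\in S(n)$.
   Context: $[n]=\{1,\dots,n\}$. A stable $n$-labeled tree is a finite tree with exactly $n$ leaves labeled bijectively by $[n]$, all of whose internal vertices have degree $\ge 3$; $V(G)$ is the set of internal vertices, $S(n)$ the set of such trees up to label-preserving isomorphism, $S_k(n)$ those with exactly $k$ internal vertices. $G\rightsquigarrow G'$ means $G'$ is obtained from $G$ by collapsing connected sets of internal vertices to single vertices, inducing a surjection $V(G)\to V(G')$; write $w\rightsquigarrow v$ if $w$ maps to $v$. Set partitions: for set partitions $P,Q$ of $[n]$, $P\le Q$ means $Q$ refines $P$ (every block of $Q$ is contained in a block of $P$). $P\preceq Q$ means $P\le Q$ and no block $B\in P$ with $|B|\ge 2$ is contained in the union of the singleton blocks of $Q$. Basic pairs: for a set partition $P$ with $3\le |P|\le n-1$, the basic pair $(G_P,v_P)$ is the tree in $S(n)$ with a central internal vertex $v_P$ such that for each block $B\in P$ with $|B|=1$ the leaf labeled by it is adjacent to $v_P$, and for each block $B$ with $|B|\ge2$ there is an internal vertex adjacent to $v_P$ and to the leaves labeled by $B$ (and to nothing else). For such $P$ define the assignment $Z_P$ by $Z_P(H)=\{w\in V(H): \text{there is a contraction } H\rightsquigarrow G_P \text{ with } w\rightsquigarrow v_P\}$. *)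

theory Defs
  imports Main "HOL-Library.Disjoint_Sets"
begin

text \<open>A stable n-labeled tree (for n at least 3, where every leaf is adjacent to exactly
one internal vertex). It is represented by its finite set of internal vertices, the
symmetric edge relation among internal vertices, and the map att sending each leaf
label i in [n] to the internal vertex it is adjacent to.\<close>

record 'v ltree =
  verts :: "'v set"
  edges :: "('v \<times> 'v) set"
  att   :: "nat \<Rightarrow> 'v"

definition stable_tree :: "nat \<Rightarrow> 'v ltree \<Rightarrow> bool" where
  "stable_tree n T \<longleftrightarrow>
     finite (verts T) \<and> verts T \<noteq> {} \<and>
     edges T \<subseteq> verts T \<times> verts T \<and> sym (edges T) \<and> irrefl (edges T) \<and>
     (\<forall>x\<in>verts T. \<forall>y\<in>verts T. (x, y) \<in> (edges T)\<^sup>*) \<and>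
     card (edges T) = 2 * (card (verts T) - 1) \<and>
     (\<forall>i\<in>{1..n}. att T i \<in> verts T) \<and>
     (\<forall>v\<in>verts T. card {u. (v, u) \<in> edges T} + card {i\<in>{1..n}. att T i = v} \<ge> 3)"

text \<open>contracts n H G f: G is obtained from H by collapsing the connected sets of internal
vertices given by the fibres of f, and f is the induced surjection V(H) to V(G).\<close>

definition contracts :: "nat \<Rightarrow> 'v ltree \<Rightarrow> 'w ltree \<Rightarrow> ('v \<Rightarrow> 'w) \<Rightarrow> bool" where
  "contracts n H G f \<longleftrightarrow>
     f ` verts H = verts G \<and>
     (\<forall>y\<in>verts G. \<forall>x\<in>verts H. \<forall>x'\<in>verts H. f x = y \<longrightarrow> f x' = y \<longrightarrow>
        (x, x') \<in> (edges H \<inter> {z\<in>verts H. f z = y} \<times> {z\<in>verts H. f z = y})\<^sup>*) \<and>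
     (\<forall>y\<in>verts G. \<forall>y'\<in>verts G. y \<noteq> y' \<longrightarrow>
        ((y, y') \<in> edges G \<longleftrightarrow> (\<exists>x x'. (x, x') \<in> edges H \<and> f x = y \<and> f x' = y'))) \<and>
     (\<forall>i\<in>{1..n}. att G i = f (att H i))"

text \<open>Set partitions of [n]; P \<le> Q means Q refines P.\<close>

definition part_le :: "nat set set \<Rightarrow> nat set set \<Rightarrow> bool" where
  "part_le P Q \<longleftrightarrow> (\<forall>B\<in>Q. \<exists>C\<in>P. B \<subseteq> C)"

definition part_preceq :: "nat set set \<Rightarrow> nat set set \<Rightarrow> bool" where
  "part_preceq P Q \<longleftrightarrow> part_le P Q \<and>
     (\<forall>B\<in>P. card B \<ge> 2 \<longrightarrow> \<not> B \<subseteq> \<Union>{C\<in>Q. card C = 1})"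

text \<open>The basic pair (G_P, v_P): internal vertices are None (= v_P) and Some B for each
block B of P with at least two elements.\<close>

definition block_of :: "nat set set \<Rightarrow> nat \<Rightarrow> nat set" where
  "block_of P i = (THE B. B \<in> P \<and> i \<in> B)"

definition basic_tree :: "nat set set \<Rightarrow> nat set option ltree" where
  "basic_tree P =
     \<lparr> verts = insert None (Some ` {B\<in>P. card B \<ge> 2}),
       edges = {(None, Some B) | B. B \<in> P \<and> card B \<ge> 2}
             \<union> {(Some B, None) | B. B \<in> P \<and> card B \<ge> 2},
       att = (\<lambda>i. if card (block_of P i) \<ge> 2 then Some (block_of P i) else None) \<rparr>"

definition basic_vertex :: "nat set option" where
  "basic_vertex = None"

definition Z :: "nat \<Rightarrow> nat set set \<Rightarrow> 'v ltree \<Rightarrow> 'v set" where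
  "Z n P H = {w \<in> verts H. \<exists>f. contracts n H (basic_tree P) f \<and> f w = basic_vertex}"

end

theory Submission
  imports Defs
begin

text \<open>Let \<open>Q'\<close> arise from \<open>Q\<close> by splitting into singletons every block of \<open>Q\<close> that
lies inside the union of the singleton blocks of \<open>P\<close>; then \<open>Q' \<preceq> P\<close> and \<open>Q \<le> Q'\<close>.
On basic trees this splitting is itself a contraction \<open>G\<^sub>Q \<leadsto> G\<^sub>Q\<^sub>'\<close>: the vertices of
the split blocks are merged into the centre. Contractions compose, so every contraction
\<open>H \<leadsto> G\<^sub>Q\<close> sending \<open>w\<close> to the centre yields one \<open>H \<leadsto> G\<^sub>Q\<^sub>'\<close> doing the same.\<close>

lemma
  assumes "contracts n H G f"
  shows contracts_image: "f ` verts H = verts G"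
    and contracts_fibre_connected: "\<lbrakk>y \<in> verts G; x \<in> verts H; x' \<in> verts H; f x = y; f x' = y\<rbrakk>
           \<Longrightarrow> (x, x') \<in> (edges H \<inter> {z\<in>verts H. f z = y} \<times> {z\<in>verts H. f z = y})\<^sup>*"
    and contracts_edge_iff: "\<lbrakk>y \<in> verts G; y' \<in> verts G; y \<noteq> y'\<rbrakk>
           \<Longrightarrow> (y, y') \<in> edges G \<longleftrightarrow> (\<exists>x x'. (x, x') \<in> edges H \<and> f x = y \<and> f x' = y')"
    and contracts_att: "i \<in> {1..n} \<Longrightarrow> att G i = f (att H i)"
  using assms unfolding contracts_def by simp_all

lemma contractsI:
  assumes "f ` verts H = verts G"
    and "\<And>y x x'. \<lbrakk>y \<in> verts G; x \<in> verts H; x' \<in> verts H; f x = y; f x' = y\<rbrakk>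
           \<Longrightarrow> (x, x') \<in> (edges H \<inter> {z\<in>verts H. f z = y} \<times> {z\<in>verts H. f z = y})\<^sup>*"
    and "\<And>y y'. \<lbrakk>y \<in> verts G; y' \<in> verts G; y \<noteq> y'\<rbrakk>
           \<Longrightarrow> (y, y') \<in> edges G \<longleftrightarrow> (\<exists>x x'. (x, x') \<in> edges H \<and> f x = y \<and> f x' = y')"
    and "\<And>i. i \<in> {1..n} \<Longrightarrow> att G i = f (att H i)"
  shows "contracts n H G f"
  using assms unfolding contracts_def by simp

lemma contracts_lift_path:
  assumes f: "contracts n H G f" and eH: "edges H \<subseteq> verts H \<times> verts H"
    and S: "S \<subseteq> verts G" "a \<in> S" and path: "(a, b) \<in> (edges G \<inter> S \<times> S)\<^sup>*"
    and x: "x \<in> verts H" "f x = a" and x': "x' \<in> verts H" "f x' = b"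
  shows "(x, x') \<in> (edges H \<inter> {z\<in>verts H. f z \<in> S} \<times> {z\<in>verts H. f z \<in> S})\<^sup>*"
  using path x'
proof (induction b arbitrary: x' rule: rtrancl_induct)
  let ?R = "edges H \<inter> {z\<in>verts H. f z \<in> S} \<times> {z\<in>verts H. f z \<in> S}"
  have fibre: "(u, u') \<in> ?R\<^sup>*"
    if "c \<in> S" "u \<in> verts H" "u' \<in> verts H" "f u = c" "f u' = c" for c u u'
  proof -
    have "(u, u') \<in> (edges H \<inter> {z\<in>verts H. f z = c} \<times> {z\<in>verts H. f z = c})\<^sup>*"
      using contracts_fibre_connected[OF f] that S(1) by blast
    moreover have "edges H \<inter> {z\<in>verts H. f z = c} \<times> {z\<in>verts H. f z = c} \<subseteq> ?R"
      using \<open>c \<in> S\<close> by auto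
    ultimately show ?thesis by (meson rtrancl_mono subsetD)
  qed
  {
    case base
    then show ?case using fibre[OF S(2) x(1)] x(2) by blast
  next
    case (step c b)
    show ?case
    proof (cases "c = b")
      case True
      then show ?thesis using step by blast
    next
      case False
      have "c \<in> verts G" "b \<in> verts G" "(c, b) \<in> edges G" using step.hyps(2) S(1) by auto
      then obtain u u' where u: "(u, u') \<in> edges H" "f u = c" "f u' = b"
        using contracts_edge_iff[OF f] False by blast
      with eH have "u \<in> verts H" "u' \<in> verts H" by auto
      then have "(x, u) \<in> ?R\<^sup>*" "(u, u') \<in> ?R" "(u', x') \<in> ?R\<^sup>*"
        using step u fibre[of b u' x'] by auto
      then show ?thesis by (meson rtrancl_into_rtrancl rtrancl_trans)
    qed
  }
qed

lemma contracts_comp: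
  assumes f: "contracts n H G f" and h: "contracts n G K h"
    and eH: "edges H \<subseteq> verts H \<times> verts H" and eG: "edges G \<subseteq> verts G \<times> verts G"
  shows "contracts n H K (h \<circ> f)"
proof (rule contractsI)
  have fV: "f ` verts H = verts G" using contracts_image[OF f] .
  then show "(h \<circ> f) ` verts H = verts K" using contracts_image[OF h] by (metis image_comp)
  fix y x x' assume y: "y \<in> verts K" and x: "x \<in> verts H" "x' \<in> verts H" "(h \<circ> f) x = y" "(h \<circ> f) x' = y"
  let ?S = "{z\<in>verts G. h z = y}"
  have "f x \<in> verts G" "f x' \<in> verts G" using x fV by auto
  then have "(f x, f x') \<in> (edges G \<inter> ?S \<times> ?S)\<^sup>*"
    using contracts_fibre_connected[OF h y] x by simp
  then have "(x, x') \<in> (edges H \<inter> {z\<in>verts H. f z \<in> ?S} \<times> {z\<in>verts H. f z \<in> ?S})\<^sup>*"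
    using contracts_lift_path[OF f eH, of ?S] x \<open>f x \<in> verts G\<close> by simp
  moreover have "{z\<in>verts H. f z \<in> ?S} = {z\<in>verts H. (h \<circ> f) z = y}"
    using fV by auto
  ultimately show "(x, x') \<in> (edges H \<inter> {z\<in>verts H. (h \<circ> f) z = y} \<times> {z\<in>verts H. (h \<circ> f) z = y})\<^sup>*"
    by simp
next
  fix y y' assume y: "y \<in> verts K" "y' \<in> verts K" "y \<noteq> y'"
  have "(\<exists>a b. (a, b) \<in> edges G \<and> h a = y \<and> h b = y') \<longleftrightarrow>
        (\<exists>x x'. (x, x') \<in> edges H \<and> h (f x) = y \<and> h (f x') = y')"
  proof
    assume "\<exists>a b. (a, b) \<in> edges G \<and> h a = y \<and> h b = y'"
    then obtain a b where ab: "(a, b) \<in> edges G" "h a = y" "h b = y'" by blast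
    moreover have "a \<in> verts G" "b \<in> verts G" "a \<noteq> b" using ab eG \<open>y \<noteq> y'\<close> by auto
    ultimately show "\<exists>x x'. (x, x') \<in> edges H \<and> h (f x) = y \<and> h (f x') = y'"
      using contracts_edge_iff[OF f] by blast
  next
    assume "\<exists>x x'. (x, x') \<in> edges H \<and> h (f x) = y \<and> h (f x') = y'"
    then obtain x x' where xx: "(x, x') \<in> edges H" "h (f x) = y" "h (f x') = y'" by blast
    moreover have "f x \<in> verts G" "f x' \<in> verts G" "f x \<noteq> f x'"
      using xx eH contracts_image[OF f] \<open>y \<noteq> y'\<close> by auto
    ultimately show "\<exists>a b. (a, b) \<in> edges G \<and> h a = y \<and> h b = y'"
      using contracts_edge_iff[OF f] by blast
  qed
  then show "(y, y') \<in> edges K \<longleftrightarrow> (\<exists>x x'. (x, x') \<in> edges H \<and> (h \<circ> f) x = y \<and> (h \<circ> f) x' = y')"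
    using contracts_edge_iff[OF h y] by simp
next
  fix i assume "i \<in> {1..n}"
  then show "att K i = (h \<circ> f) (att H i)" using contracts_att[OF f] contracts_att[OF h] by simp
qed

lemma block_of_eq:
  assumes "partition_on A P" "B \<in> P" "i \<in> B"
  shows "block_of P i = B"
  unfolding block_of_def
proof (rule the_equality)
  show "B \<in> P \<and> i \<in> B" using assms by auto
  fix C assume "C \<in> P \<and> i \<in> C"
  then show "C = B" using assms unfolding partition_on_def disjoint_def by blast
qed

definition split_blocks :: "nat set set \<Rightarrow> nat set set \<Rightarrow> nat set set" where
  "split_blocks Q X = (Q - X) \<union> (\<lambda>i. {i}) ` \<Union>X"

lemma partition_on_split_blocks:
  assumes Q: "partition_on A Q" and XQ: "X \<subseteq> Q"
  shows "partition_on A (split_blocks Q X)"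
proof (rule partition_onI)
  have "\<Union>Q = A" "{} \<notin> Q" using Q by (auto simp: partition_on_def)
  then show "\<Union>(split_blocks Q X) = A" "{} \<notin> split_blocks Q X"
    using XQ unfolding split_blocks_def by auto
next
  fix B C assume "B \<in> split_blocks Q X" "C \<in> split_blocks Q X" "B \<noteq> C"
  moreover have "disjnt B' C'" if "B' \<in> Q" "C' \<in> Q" "B' \<noteq> C'" for B' C'
    using Q that by (auto simp: partition_on_def pairwise_def)
  ultimately show "disjnt B C" unfolding split_blocks_def disjnt_def using XQ by auto
qed

lemma part_le_split_blocks:
  assumes "X \<subseteq> Q"
  shows "part_le Q (split_blocks Q X)"
  using assms unfolding part_le_def split_blocks_def by blast

lemma part_preceq_split_blocks:
  assumes pP: "partition_on A P" and QP: "part_le Q P"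
    and X_def: "X = {B\<in>Q. B \<subseteq> \<Union>{C\<in>P. card C = 1}}"
  shows "part_preceq (split_blocks Q X) P"
  unfolding part_preceq_def
proof
  show "part_le (split_blocks Q X) P"
    unfolding part_le_def
  proof
    fix C assume C: "C \<in> P"
    obtain D where D: "D \<in> Q" "C \<subseteq> D" using QP C unfolding part_le_def by blast
    show "\<exists>D'\<in>split_blocks Q X. C \<subseteq> D'"
    proof (cases "D \<in> X")
      case False
      then show ?thesis using D unfolding split_blocks_def by blast
    next
      case True
      obtain j where j: "j \<in> C" using C pP unfolding partition_on_def by (metis ex_in_conv)
      then obtain C' where C': "C' \<in> P" "card C' = 1" "j \<in> C'"
        using True D unfolding X_def by blast
      then have "C' = {j}" by (metis card_1_singletonE singletonD)
      moreover have "C = C'" using block_of_eq[OF pP C j] block_of_eq[OF pP C'(1,3)] by simp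
      moreover have "{j} \<in> split_blocks Q X" using True D j unfolding split_blocks_def by blast
      ultimately show ?thesis by blast
    qed
  qed
  show "\<forall>B\<in>split_blocks Q X. 2 \<le> card B \<longrightarrow> \<not> B \<subseteq> \<Union>{C\<in>P. card C = 1}"
    unfolding split_blocks_def X_def by auto
qed

lemma edges_basic_tree_subset: "edges (basic_tree P) \<subseteq> verts (basic_tree P) \<times> verts (basic_tree P)"
  unfolding basic_tree_def by auto

lemma big_blocks_split_blocks: "{B \<in> split_blocks Q X. 2 \<le> card B} = {B\<in>Q - X. 2 \<le> card B}"
  unfolding split_blocks_def by auto

lemma verts_basic_tree_split_blocks:
  "verts (basic_tree (split_blocks Q X)) = insert None (Some ` {B\<in>Q - X. 2 \<le> card B})"
  using big_blocks_split_blocks by (simp add: basic_tree_def)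

lemma edges_basic_tree_split_blocks:
  "edges (basic_tree (split_blocks Q X)) =
     {(None, Some B) | B. B \<in> Q - X \<and> 2 \<le> card B} \<union> {(Some B, None) | B. B \<in> Q - X \<and> 2 \<le> card B}"
  using big_blocks_split_blocks by (simp add: basic_tree_def) blast

definition merge_into_centre :: "nat set set \<Rightarrow> nat set option \<Rightarrow> nat set option" where
  "merge_into_centre X v = Option.bind v (\<lambda>B. if B \<in> X then None else Some B)"

lemma merge_into_centre_simps [simp]:
  "merge_into_centre X None = None"
  "merge_into_centre X (Some B) = (if B \<in> X then None else Some B)"
  by (simp_all add: merge_into_centre_def)

lemma contracts_basic_tree_split_blocks:
  assumes pQ: "partition_on {1..n} Q" and XQ: "X \<subseteq> Q"
  shows "contracts n (basic_tree Q) (basic_tree (split_blocks Q X)) (merge_into_centre X)"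
proof -
  let ?m = "merge_into_centre X" and ?G = "basic_tree Q" and ?G' = "basic_tree (split_blocks Q X)"
  let ?C = "{z\<in>verts ?G. ?m z = None}"
  have spoke: "(v, None) \<in> (edges ?G \<inter> ?C \<times> ?C)\<^sup>* \<and> (None, v) \<in> (edges ?G \<inter> ?C \<times> ?C)\<^sup>*"
    if "v \<in> ?C" for v
  proof (cases v)
    case (Some B)
    then have "(v, None) \<in> edges ?G \<inter> ?C \<times> ?C \<and> (None, v) \<in> edges ?G \<inter> ?C \<times> ?C"
      using that by (auto simp: basic_tree_def split: if_splits)
    then show ?thesis by blast
  qed simp
  show ?thesis
  proof (rule contractsI)
    show "?m ` verts ?G = verts ?G'"
      unfolding verts_basic_tree_split_blocks using XQ by (force simp: basic_tree_def split: if_splits)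
  next
    fix y x x' assume x: "x \<in> verts ?G" "x' \<in> verts ?G" "?m x = y" "?m x' = y"
    show "(x, x') \<in> (edges ?G \<inter> {z\<in>verts ?G. ?m z = y} \<times> {z\<in>verts ?G. ?m z = y})\<^sup>*"
    proof (cases y)
      case None
      have "x \<in> ?C" "x' \<in> ?C" using x None by simp_all
      then have "(x, None) \<in> (edges ?G \<inter> ?C \<times> ?C)\<^sup>*" "(None, x') \<in> (edges ?G \<inter> ?C \<times> ?C)\<^sup>*"
        using spoke by blast+
      then show ?thesis unfolding None by (rule rtrancl_trans)
    next
      case (Some B)
      then have "x = x'" using x by (cases x; cases x') (auto split: if_splits)
      then show ?thesis by simp
    qed
  next
    fix y y' :: "nat set option" assume "y \<noteq> y'"
    show "(y, y') \<in> edges ?G' \<longleftrightarrow> (\<exists>x x'. (x, x') \<in> edges ?G \<and> ?m x = y \<and> ?m x' = y')"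
    proof
      assume "(y, y') \<in> edges ?G'"
      then have "(y, y') \<in> edges ?G" "?m y = y" "?m y' = y'"
        unfolding edges_basic_tree_split_blocks by (auto simp: basic_tree_def)
      then show "\<exists>x x'. (x, x') \<in> edges ?G \<and> ?m x = y \<and> ?m x' = y'" by blast
    next
      assume "\<exists>x x'. (x, x') \<in> edges ?G \<and> ?m x = y \<and> ?m x' = y'"
      then obtain x x' where "(x, x') \<in> edges ?G" "?m x = y" "?m x' = y'" by blast
      with \<open>y \<noteq> y'\<close> show "(y, y') \<in> edges ?G'"
        unfolding edges_basic_tree_split_blocks by (auto simp: basic_tree_def split: if_splits)
    qed
  next
    fix i assume "i \<in> {1..n}"
    then obtain B where B: "B \<in> Q" "i \<in> B" using pQ unfolding partition_on_def by blast
    have "block_of (split_blocks Q X) i = (if B \<in> X then {i} else B)"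
      using block_of_eq[OF partition_on_split_blocks[OF pQ XQ]] B unfolding split_blocks_def by auto
    then show "att ?G' i = ?m (att ?G i)"
      using block_of_eq[OF pQ B] by (auto simp: basic_tree_def)
  qed
qed

lemma Z_subset_of_basic_tree_contracts:
  assumes "stable_tree n H" and m: "contracts n (basic_tree Q) (basic_tree Q') m"
    and "m basic_vertex = basic_vertex"
  shows "Z n Q H \<subseteq> Z n Q' H"
proof
  fix w assume "w \<in> Z n Q H"
  then obtain f where w: "w \<in> verts H" "contracts n H (basic_tree Q) f" "f w = basic_vertex"
    unfolding Z_def by blast
  have "edges H \<subseteq> verts H \<times> verts H" using assms(1) unfolding stable_tree_def by simp
  then have "contracts n H (basic_tree Q') (m \<circ> f)"
    using contracts_comp[OF w(2) m _ edges_basic_tree_subset] by blast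
  then show "w \<in> Z n Q' H" using w assms(3) unfolding Z_def by auto
qed

theorem lemma6p3:
  fixes n :: nat and P Q :: "nat set set"
  assumes "partition_on {1..n} P" and "3 \<le> card P" and "card P \<le> n - 1"
    and "partition_on {1..n} Q" and "part_le Q P" and "card Q \<ge> 3"
  shows "\<exists>Q'. partition_on {1..n} Q' \<and> part_preceq Q' P \<and> part_le Q Q' \<and>
           (\<forall>H :: 'v ltree. stable_tree n H \<longrightarrow> Z n Q H \<subseteq> Z n Q' H)"
proof -
  define X where "X = {B\<in>Q. B \<subseteq> \<Union>{C\<in>P. card C = 1}}"
  have XQ: "X \<subseteq> Q" unfolding X_def by auto
  have "contracts n (basic_tree Q) (basic_tree (split_blocks Q X)) (merge_into_centre X)"
    using contracts_basic_tree_split_blocks[OF assms(4) XQ] .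
  moreover have "merge_into_centre X basic_vertex = basic_vertex"
    by (simp add: basic_vertex_def)
  ultimately have "\<forall>H :: 'v ltree. stable_tree n H \<longrightarrow> Z n Q H \<subseteq> Z n (split_blocks Q X) H"
    using Z_subset_of_basic_tree_contracts by blast
  then show ?thesis
    using partition_on_split_blocks[OF assms(4) XQ] part_le_split_blocks[OF XQ]
      part_preceq_split_blocks[OF assms(1,5) X_def] by blast
qed

end
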